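(* Let $p\ge2$, $\theta>1$, $a>0$ and $\lambda>0$, and write $\phi_p(t)=|t|^{p-2}t$. Let $h\in C^1[0,a]$ be such that $r^{\theta-1}\phi_p(h')\in C^1(0,a)$ and \[ (r^{\theta-1}\phi_p(h'))'+\lambda r^{\theta-1}\phi_p(h)=0\quad\text{in }(0,a). \] Then: (1) $h'(0)=0$; (2) $r^{\theta-1}\phi_p(h')\in C^1[0,a)$; (3) $(r^{\theta-1}\phi_p(h'))'(0)=0$. *)

theory Defs
  imports "HOL-Analysis.Analysis"
begin

definition phi_p :: "real \<Rightarrow> real \<Rightarrow> real" where
  "phi_p p t = \<bar>t\<bar> powr (p - 2) * t"

end

theory Submission
  imports Defs
begin

text \<open>
  Let w(r) = r^(\<theta>-1) \<phi>_p(h'(r)). The equation says w' = -\<lambda> r^(\<theta>-1) \<phi>_p(h), which is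
  O(r^(\<theta>-1)) because h is bounded. As \<theta> > 1, w is continuous on [0,a] with w(0) = 0, so the
  mean value theorem gives w(r) = O(r^\<theta>). Dividing by r^(\<theta>-1) yields \<phi>_p(h'(r)) = O(r),
  hence h'(0) = 0; and w(r)/r = O(r^(\<theta>-1)) shows w'(0) = 0, which is the value at 0 of the
  continuous right-hand side -\<lambda> r^(\<theta>-1) \<phi>_p(h(r)).
\<close>

lemma abs_phi_p: "\<bar>phi_p p t\<bar> = \<bar>t\<bar> powr (p - 1)"
proof (cases "t = 0")
  case True
  then show ?thesis by (simp add: phi_p_def)
next
  case False
  have "\<bar>phi_p p t\<bar> = \<bar>t\<bar> powr (p - 2) * \<bar>t\<bar> powr 1"
    using False by (simp add: phi_p_def abs_mult)
  also have "\<dots> = \<bar>t\<bar> powr (p - 1)"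
    by (simp only: powr_add [symmetric]) simp
  finally show ?thesis .
qed

lemma phi_p_eq_0_iff: "phi_p p t = 0 \<longleftrightarrow> t = 0"
  by (simp add: phi_p_def)

lemma isCont_phi_p:
  assumes "p > 1"
  shows "isCont (phi_p p) t"
proof (cases "t = 0")
  case False
  then show ?thesis
    unfolding phi_p_def by (intro continuous_intros continuous_powr) auto
next
  case True
  have "(phi_p p \<longlongrightarrow> 0) (at 0)"
  proof (rule Lim_null_comparison)
    show "\<forall>\<^sub>F x in at 0. norm (phi_p p x) \<le> \<bar>x\<bar> powr (p - 1)"
      by (simp add: abs_phi_p)
    show "((\<lambda>x. \<bar>x\<bar> powr (p - 1)) \<longlongrightarrow> 0) (at (0::real))"
      using assms by (intro tendsto_zero_powrI tendsto_rabs_zero tendsto_ident_at) auto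
  qed
  then show ?thesis
    using True by (simp add: isCont_def phi_p_def)
qed

lemma continuous_on_phi_p [continuous_intros]:
  assumes "p > 1" and "continuous_on S f"
  shows "continuous_on S (\<lambda>x. phi_p p (f x))"
  using assms isCont_phi_p
  by (intro continuous_on_compose2[of UNIV "phi_p p" S f]) (auto intro: continuous_at_imp_continuous_on)

lemma abs_diff_le_if_deriv_le_powr:
  fixes w W :: "real \<Rightarrow> real"
  assumes "\<beta> \<ge> 0" and "continuous_on {0..a} w"
    and "\<forall>r\<in>{0<..<a}. (w has_real_derivative W r) (at r)"
    and "\<forall>r\<in>{0<..<a}. \<bar>W r\<bar> \<le> C * r powr \<beta>"
    and r: "r \<in> {0<..<a}"
  shows "\<bar>w r - w 0\<bar> \<le> C * r powr \<beta> * r"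
proof -
  obtain z where z: "0 < z" "z < r" "w r - w 0 = W z * (r - 0)"
  proof (rule mvt[of 0 r w "\<lambda>x y. W x * y"])
    show "continuous_on {0..r} w"
      using assms(2) by (rule continuous_on_subset) (use r in auto)
    show "(w has_derivative (\<lambda>y. W x * y)) (at x)" if "0 < x" "x < r" for x
      using assms(3) that r by (auto simp: has_field_derivative_def)
  qed (use r in auto)
  have "0 \<le> C * z powr \<beta>"
    using assms(4) z r by (meson abs_ge_zero order_trans greaterThanLessThan_iff less_trans)
  then have "C \<ge> 0"
    using z by (simp add: zero_le_mult_iff)
  then have "\<bar>W z\<bar> \<le> C * r powr \<beta>"
    using assms(1,4) z r by (meson dual_order.trans greaterThanLessThan_iff less_trans
        less_imp_le mult_left_mono powr_mono2)
  then show ?thesis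
    using z by (simp add: abs_mult)
qed

lemma has_real_derivative_on_Ico_if_abs_le_powr:
  fixes w W :: "real \<Rightarrow> real"
  assumes "\<beta> > 0" and "W 0 = 0"
    and "\<forall>r\<in>{0<..<a}. (w has_real_derivative W r) (at r)"
    and "\<forall>r\<in>{0<..<a}. \<bar>w r - w 0\<bar> \<le> C * r powr \<beta> * r"
  shows "\<forall>r\<in>{0..<a}. (w has_real_derivative W r) (at r within {0..<a})"
proof -
  have "((\<lambda>r. (w r - w 0) / (r - 0)) \<longlongrightarrow> 0) (at 0 within {0..<a})"
  proof (rule Lim_null_comparison)
    show "\<forall>\<^sub>F r in at 0 within {0..<a}. norm ((w r - w 0) / (r - 0)) \<le> C * r powr \<beta>"
      unfolding eventually_at_filter
      using assms(4) by (intro always_eventually) (auto simp: abs_divide pos_divide_le_eq)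
    have "((\<lambda>r. r powr \<beta>) \<longlongrightarrow> 0) (at 0 within {0..<a})"
      using assms(1) by (intro tendsto_zero_powrI tendsto_ident_at) (auto simp: eventually_at_filter)
    then show "((\<lambda>r. C * r powr \<beta>) \<longlongrightarrow> 0) (at 0 within {0..<a})"
      by (rule tendsto_mult_right_zero)
  qed
  then have "(w has_real_derivative W 0) (at 0 within {0..<a})"
    using assms(2) by (simp add: has_field_derivative_iff)
  moreover have "(w has_real_derivative W r) (at r within {0..<a})" if "r \<in> {0<..<a}" for r
    using assms(3) that by (auto intro: has_field_derivative_at_within)
  ultimately show ?thesis
    by (metis atLeastLessThan_iff greaterThanLessThan_iff order_le_less)
qed

lemma eq_0_at_0_if_abs_le_linear:
  fixes g :: "real \<Rightarrow> real"
  assumes "a > 0" and "continuous_on {0..a} g" and "\<forall>r\<in>{0<..<a}. \<bar>g r\<bar> \<le> C * r"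
  shows "g 0 = 0"
proof -
  have "((\<lambda>r. C * r) \<longlongrightarrow> C * 0) (at_right 0)"
    by (intro tendsto_intros)
  moreover have "((\<lambda>r. \<bar>g r\<bar>) \<longlongrightarrow> \<bar>g 0\<bar>) (at_right 0)"
    using continuous_on_Icc_at_rightD[OF assms(2,1)] by (rule tendsto_rabs)
  moreover have "\<forall>\<^sub>F r in at_right 0. \<bar>g r\<bar> \<le> C * r"
    unfolding eventually_at_right_field using assms(1,3) by (intro exI[of _ a]) auto
  ultimately have "\<bar>g 0\<bar> \<le> C * 0"
    by (rule tendsto_le[rotated 1]) simp
  then show ?thesis
    by simp
qed

theorem mainTheorem15:
  fixes p \<theta> a lam :: real and h h' w' :: "real \<Rightarrow> real"
  assumes hp: "p \<ge> 2" and h\<theta>: "\<theta> > 1" and ha: "a > 0" and hlam: "lam > 0"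
    and hC1: "\<forall>r\<in>{0..a}. (h has_real_derivative h' r) (at r within {0..a})"
    and hC1c: "continuous_on {0..a} h'"
    and wC1: "\<forall>r\<in>{0<..<a}.
        ((\<lambda>s. s powr (\<theta> - 1) * phi_p p (h' s)) has_real_derivative w' r) (at r)"
    and wC1c: "continuous_on {0<..<a} w'"
    and eq: "\<forall>r\<in>{0<..<a}. w' r + lam * r powr (\<theta> - 1) * phi_p p (h r) = 0"
  shows "h' 0 = 0 \<and>
    (\<exists>W'. (\<forall>r\<in>{0..<a}.
        ((\<lambda>s. s powr (\<theta> - 1) * phi_p p (h' s)) has_real_derivative W' r) (at r within {0..<a}))
      \<and> continuous_on {0..<a} W' \<and> W' 0 = 0)"
proof -
  define w where "w = (\<lambda>s. s powr (\<theta> - 1) * phi_p p (h' s))"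
  define W where "W = (\<lambda>r. - lam * r powr (\<theta> - 1) * phi_p p (h r))"
  have "\<forall>r\<in>{0<..<a}. w' r = W r"
    using eq unfolding W_def by (simp add: algebra_simps eq_neg_iff_add_eq_0)
  with wC1 have w_deriv: "\<forall>r\<in>{0<..<a}. (w has_real_derivative W r) (at r)"
    unfolding w_def by simp
  have h_cont: "continuous_on {0..a} h"
    using hC1 by (meson DERIV_continuous continuous_on_eq_continuous_within)
  have "continuous_on {0..a} (\<lambda>r. r powr (\<theta> - 1))"
    using h\<theta> by (intro continuous_on_powr' continuous_intros) auto
  then have w_cont: "continuous_on {0..a} w" and W_cont: "continuous_on {0..a} W"
    unfolding w_def W_def using hp hC1c h_cont by (auto intro!: continuous_intros)
  have "bounded ((\<lambda>r. phi_p p (h r)) ` {0..a})"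
    using hp h_cont by (intro compact_imp_bounded compact_continuous_image continuous_intros) auto
  then obtain K where "\<forall>r\<in>{0..a}. \<bar>phi_p p (h r)\<bar> \<le> K"
    unfolding bounded_iff by auto
  then have "\<forall>r\<in>{0<..<a}. \<bar>W r\<bar> \<le> lam * K * r powr (\<theta> - 1)"
    using hlam by (auto simp: W_def abs_mult mult.commute mult.left_commute intro!: mult_left_mono)
  then have w_bound: "\<forall>r\<in>{0<..<a}. \<bar>w r - w 0\<bar> \<le> lam * K * r powr (\<theta> - 1) * r"
    using abs_diff_le_if_deriv_le_powr[OF _ w_cont w_deriv] h\<theta> by simp
  have w_0: "w 0 = 0" and W_0: "W 0 = 0"
    using h\<theta> by (simp_all add: w_def W_def)
  have "\<forall>r\<in>{0<..<a}. \<bar>phi_p p (h' r)\<bar> \<le> lam * K * r"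
    using w_bound by (simp add: w_0 w_def abs_mult mult.assoc)
  then have "phi_p p (h' 0) = 0"
    using hp hC1c by (intro eq_0_at_0_if_abs_le_linear[OF ha]) (auto intro!: continuous_intros)
  moreover have "\<forall>r\<in>{0..<a}. (w has_real_derivative W r) (at r within {0..<a})"
    using has_real_derivative_on_Ico_if_abs_le_powr[OF _ W_0 w_deriv w_bound] h\<theta> by simp
  moreover have "continuous_on {0..<a} W"
    using W_cont by (rule continuous_on_subset) auto
  ultimately show ?thesis
    using W_0 unfolding w_def phi_p_eq_0_iff by blast
qed

end
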